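(* Let $r\ge2$, $t\ge1$, $0<\mu<1/(3r^2)^{12}$, $0<\eta<\mu^2/3$, and let $n$ be sufficiently large. Fix an $r$-partition $Q=(V_1,\dots,V_r)$ of $[n]$ and two distinct vertices $x,y\in V_1$. Then there is a set $\mathcal P$ of $r$-partitions of $[n]\setminus\{x,y\}$ with $|\mathcal P|\le e^{\mu^{2/3}n}$ such that for every $G\in F_Q^*(n,T_{r+1}^t,\eta,\mu)$, every optimal $r$-partition of $G-\{x,y\}$ belongs to $\mathcal P$.
   Context: A digraph has no loops and at most one arc in each direction between two vertices. $T_{r+1}^t$ is the blow-up of the transitive tournament $T_{r+1}$ in which each vertex is replaced by an independent set of size $t$ and each arc $ij$ by all arcs from the $i$-th set to the $j$-th set. For an $r$-partition $Q$ of a vertex set and a digraph $G$ on it, an arc is non-crossing if both endpoints lie in the same part; $Q$ is optimal for $G$ if it minimises the number of non-crossing arcs among all $r$-partitions of that vertex set. $\overrightarrow{e}(U,W)$ is the number of arcs from $U$ to $W$. $F_Q^*(n,T_{r+1}^t,\eta,\mu)$ is the set of labelled $T_{r+1}^t$-free digraphs $G$ on $[n]$ such that $Q=(V_1,\dots,V_r)$ is optimal for $G$, $G$ has at most $\eta n^2$ non-crossing arcs with respect to $Q$, (F2) for all distinct $i,j\in[r]$ and all $U_i\subseteq V_i$, $U_j\subseteq V_j$ with $|U_i|,|U_j|\ge\mu n$ we have $\overrightarrow{e}(U_i,U_j),\overrightarrow{e}(U_j,U_i)\ge\frac16|U_i||U_j|$, and (F3) $||V_i|-n/r|\le\mu n$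 for all $i$. *)

theory Defs
  imports Complex_Main "HOL-Library.FuncSet"
begin

text \<open>A digraph on vertex set V: a set of arcs (ordered pairs), no loops.
  At most one arc in each direction is automatic for a set of pairs.\<close>
definition digraph_on :: "nat set \<Rightarrow> (nat \<times> nat) set \<Rightarrow> bool" where
  "digraph_on V G \<longleftrightarrow> G \<subseteq> V \<times> V \<and> (\<forall>v. (v, v) \<notin> G)"

text \<open>An r-partition (V_1,...,V_r) of V, encoded as the part-index map
  f : V -> {0..<r}; part i+1 is {v in V. f v = i}. Parts may be empty.\<close>
definition rpart :: "nat \<Rightarrow> nat set \<Rightarrow> (nat \<Rightarrow> nat) \<Rightarrow> bool" where
  "rpart r V f \<longleftrightarrow> f \<in> V \<rightarrow>\<^sub>E {..<r}"

definition part :: "nat set \<Rightarrow> (nat \<Rightarrow> nat) \<Rightarrow> nat \<Rightarrow> nat set" where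
  "part V f i = {v \<in> V. f v = i}"

definition noncross :: "(nat \<times> nat) set \<Rightarrow> (nat \<Rightarrow> nat) \<Rightarrow> nat" where
  "noncross G f = card {(u, v) \<in> G. f u = f v}"

definition optimal :: "nat \<Rightarrow> nat set \<Rightarrow> (nat \<times> nat) set \<Rightarrow> (nat \<Rightarrow> nat) \<Rightarrow> bool" where
  "optimal r V G f \<longleftrightarrow> rpart r V f \<and> (\<forall>g. rpart r V g \<longrightarrow> noncross G f \<le> noncross G g)"

definition arcs :: "(nat \<times> nat) set \<Rightarrow> nat set \<Rightarrow> nat set \<Rightarrow> nat" where
  "arcs G U W = card (G \<inter> (U \<times> W))"

text \<open>G contains the blow-up T_{r+1}^t of the transitive tournament T_{r+1}:
  vertices (i,a), i \<le> r, a < t; arcs (i,a) -> (j,b) whenever i < j.\<close>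
definition contains_blowup :: "nat \<Rightarrow> nat \<Rightarrow> (nat \<times> nat) set \<Rightarrow> bool" where
  "contains_blowup r t G \<longleftrightarrow>
     (\<exists>\<phi> :: nat \<times> nat \<Rightarrow> nat. inj_on \<phi> ({..r} \<times> {..<t}) \<and>
        (\<forall>i j a b. i < j \<and> j \<le> r \<and> a < t \<and> b < t \<longrightarrow> (\<phi> (i, a), \<phi> (j, b)) \<in> G))"

definition FQstar :: "nat \<Rightarrow> nat \<Rightarrow> nat \<Rightarrow> real \<Rightarrow> real \<Rightarrow> (nat \<Rightarrow> nat) \<Rightarrow> (nat \<times> nat) set set" where
  "FQstar n r t \<eta> \<mu> Q = {G.
     digraph_on {1..n} G \<and> \<not> contains_blowup r t G \<and>
     optimal r {1..n} G Q \<and>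
     real (noncross G Q) \<le> \<eta> * real n ^ 2 \<and>
     (\<forall>i j Ui Uj. i < r \<and> j < r \<and> i \<noteq> j \<and> Ui \<subseteq> part {1..n} Q i \<and> Uj \<subseteq> part {1..n} Q j \<and>
        real (card Ui) \<ge> \<mu> * real n \<and> real (card Uj) \<ge> \<mu> * real n \<longrightarrow>
        real (arcs G Ui Uj) \<ge> real (card Ui) * real (card Uj) / 6 \<and>
        real (arcs G Uj Ui) \<ge> real (card Ui) * real (card Uj) / 6) \<and>
     (\<forall>i < r. \<bar>real (card (part {1..n} Q i)) - real n / real r\<bar> \<le> \<mu> * real n)}"

end

theory Submission
  imports Defs
begin

(* If two different parts of Q both met one part of an optimal partition f of G - {x, y}
   in at least mu n vertices, (F2) would put at least mu^2 n^2 / 3 arcs inside that part,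
   more than the eta n^2 non-crossing arcs that Q itself leaves; and by (F3) and pigeonhole
   every part of Q meets some part of f in mu n vertices.  So the large intersections
   define a relabelling sigma of the parts, and f differs from sigma o Q on at most
   r^2 mu n vertices.  The partitions with this property are counted by choosing sigma,
   the exceptional set and its labels; bounding the number of small exceptional sets by
   the exponential-moment trick with p = r mu gives at most
   exp (r ln r + r^2 mu n (1 - ln (r mu))), which is below exp (mu^(2/3) n) for small mu. *)

section \<open>Partitions close to a relabelling\<close>

lemma sum_Pow_power_card:
  assumes "finite A"
  shows "(\<Sum>S\<in>Pow A. (c :: 'a :: comm_semiring_1) ^ card S) = (1 + c) ^ card A"
proof -
  have "(\<Prod>x\<in>A. c + 1) = (\<Sum>S\<in>Pow A. prod (\<lambda>_. c) S * prod (\<lambda>_. 1) (A - S))"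
    by (rule prod_add[OF assms])
  then show ?thesis by (simp add: add.commute)
qed

text \<open>The exponential-moment trick behind Chernoff bounds: each term with \<open>card S \<le> m\<close>
  is at most \<open>p powr (- m)\<close> times its weighted version \<open>(c * p) ^ card S\<close>.\<close>
lemma sum_small_subsets_power_le:
  fixes c p m :: real
  assumes "finite V" and "0 \<le> c" and "0 < p" and "p \<le> 1"
  shows "(\<Sum>S | S \<subseteq> V \<and> real (card S) \<le> m. c ^ card S) \<le> p powr (- m) * (1 + c * p) ^ card V"
proof -
  let ?SS = "{S. S \<subseteq> V \<and> real (card S) \<le> m}"
  have "(\<Sum>S\<in>?SS. c ^ card S) \<le> (\<Sum>S\<in>?SS. p powr (- m) * (c * p) ^ card S)"
  proof (rule sum_mono)
    fix S assume "S \<in> ?SS"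
    then have "p powr m \<le> p ^ card S"
      using assms(3,4) powr_mono'[of "real (card S)" m p] by (simp add: powr_realpow)
    then have "1 \<le> p powr (- m) * p ^ card S"
      using assms(3) by (simp add: powr_minus field_simps)
    then have "c ^ card S * 1 \<le> c ^ card S * (p powr (- m) * p ^ card S)"
      using assms(2) by (intro mult_left_mono) auto
    then show "c ^ card S \<le> p powr (- m) * (c * p) ^ card S"
      by (simp add: power_mult_distrib mult_ac)
  qed
  also have "\<dots> \<le> (\<Sum>S\<in>Pow V. p powr (- m) * (c * p) ^ card S)"
    using assms by (intro sum_mono2) auto
  also have "\<dots> = p powr (- m) * (1 + c * p) ^ card V"
    using assms(1) by (simp add: sum_distrib_left[symmetric] sum_Pow_power_card)
  finally show ?thesis .
qed

text \<open>A function that differs from \<open>g\<close> only on \<open>S\<close> is determined by \<open>S\<close> and its values there.\<close>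
lemma card_hamming_ball_le:
  assumes "finite V" and "finite B"
  shows "card {f \<in> V \<rightarrow>\<^sub>E B. real (card {v \<in> V. f v \<noteq> g v}) \<le> m}
    \<le> (\<Sum>S | S \<subseteq> V \<and> real (card S) \<le> m. card B ^ card S)"
proof -
  define SS where "SS = {S. S \<subseteq> V \<and> real (card S) \<le> m}"
  define D where "D = Sigma SS (\<lambda>S. S \<rightarrow>\<^sub>E B)"
  define patch where "patch = (\<lambda>(S, h) v. if v \<in> V then if v \<in> S then h v else g v else undefined)"
  have finSS: "finite SS" and finS: "\<And>S. S \<in> SS \<Longrightarrow> finite S"
    using assms by (auto simp: SS_def intro: finite_subset)
  have "{f \<in> V \<rightarrow>\<^sub>E B. real (card {v \<in> V. f v \<noteq> g v}) \<le> m} \<subseteq> patch ` D"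
  proof
    fix f assume f: "f \<in> {f \<in> V \<rightarrow>\<^sub>E B. real (card {v \<in> V. f v \<noteq> g v}) \<le> m}"
    define S where "S = {v \<in> V. f v \<noteq> g v}"
    have "(S, restrict f S) \<in> D" using f by (auto simp: D_def SS_def S_def)
    moreover have "f = patch (S, restrict f S)"
      using f by (auto simp: patch_def S_def PiE_def extensional_def)
    ultimately show "f \<in> patch ` D" by blast
  qed
  moreover have finD: "finite D"
    using finSS finS assms(2) by (auto simp: D_def intro!: finite_PiE)
  ultimately have "card {f \<in> V \<rightarrow>\<^sub>E B. real (card {v \<in> V. f v \<noteq> g v}) \<le> m} \<le> card (patch ` D)"
    by (intro card_mono) auto
  also have "\<dots> \<le> card D"
    using finD by (rule card_image_le)
  also have "card D = (\<Sum>S\<in>SS. card B ^ card S)"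
    using finSS finS assms(2) by (simp add: D_def card_funcsetE finite_PiE)
  finally show ?thesis by (simp add: SS_def)
qed

definition near_relabellings :: "nat \<Rightarrow> nat set \<Rightarrow> (nat \<Rightarrow> nat) \<Rightarrow> real \<Rightarrow> (nat \<Rightarrow> nat) set" where
  "near_relabellings r V Q m =
     {f. rpart r V f \<and> (\<exists>\<sigma> \<in> {..<r} \<rightarrow>\<^sub>E {..<r}. real (card {v \<in> V. f v \<noteq> \<sigma> (Q v)}) \<le> m)}"

lemma card_near_relabellings_le:
  assumes "finite V" and "0 < p" and "p \<le> 1"
  shows "real (card (near_relabellings r V Q m)) \<le> real r ^ r * p powr (- m) * (1 + real r * p) ^ card V"
proof -
  let ?ball = "\<lambda>\<sigma>. {f \<in> V \<rightarrow>\<^sub>E {..<r}. real (card {v \<in> V. f v \<noteq> \<sigma> (Q v)}) \<le> m}"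
  have "near_relabellings r V Q m = (\<Union>\<sigma> \<in> {..<r} \<rightarrow>\<^sub>E {..<r}. ?ball \<sigma>)"
    by (auto simp: near_relabellings_def rpart_def)
  then have "card (near_relabellings r V Q m) \<le> (\<Sum>\<sigma> \<in> {..<r} \<rightarrow>\<^sub>E {..<r}. card (?ball \<sigma>))"
    by (simp add: card_UN_le finite_PiE)
  also have "\<dots> \<le> (\<Sum>\<sigma> \<in> {..<r} \<rightarrow>\<^sub>E {..<r}. \<Sum>S | S \<subseteq> V \<and> real (card S) \<le> m. r ^ card S)"
  proof (rule sum_mono)
    fix \<sigma>
    show "card (?ball \<sigma>) \<le> (\<Sum>S | S \<subseteq> V \<and> real (card S) \<le> m. r ^ card S)"
      using card_hamming_ball_le[OF assms(1) finite_lessThan, where g = "\<sigma> \<circ> Q" and m = m] by simp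
  qed
  finally have "card (near_relabellings r V Q m)
      \<le> r ^ r * (\<Sum>S | S \<subseteq> V \<and> real (card S) \<le> m. r ^ card S)"
    by (simp add: card_funcsetE)
  then have "real (card (near_relabellings r V Q m))
      \<le> real r ^ r * (\<Sum>S | S \<subseteq> V \<and> real (card S) \<le> m. real r ^ card S)"
    by (simp only: of_nat_le_iff flip: of_nat_power of_nat_sum of_nat_mult)
  also have "\<dots> \<le> real r ^ r * (p powr (- m) * (1 + real r * p) ^ card V)"
    using sum_small_subsets_power_le[OF assms(1) _ assms(2,3)] by (intro mult_left_mono) auto
  finally show ?thesis by (simp add: mult_ac)
qed

lemma card_near_relabellings_le_exp:
  assumes "finite V" and "card V \<le> n" and "r \<ge> 1" and "0 < \<mu>" and "real r * \<mu> \<le> 1"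
  shows "real (card (near_relabellings r V Q (real r ^ 2 * \<mu> * real n)))
    \<le> exp (real r * ln (real r) + real r ^ 2 * \<mu> * real n * (1 - ln (real r * \<mu>)))"
proof -
  define p where "p = real r * \<mu>"
  define m where "m = real r ^ 2 * \<mu> * real n"
  have p: "0 < p" "p \<le> 1" using assms by (simp_all add: p_def)
  have "(1 + real r * p) ^ card V \<le> exp (real r * p) ^ card V"
    using p by (intro power_mono) (auto simp: add.commute)
  also have "\<dots> = exp (real (card V) * (real r * p))" by (simp add: exp_of_nat_mult)
  also have "\<dots> \<le> exp (real n * (real r * p))"
    using assms(2) p by (simp add: mult_right_mono)
  also have "real n * (real r * p) = m"
    by (simp add: m_def p_def power2_eq_square)
  finally have exp_m: "(1 + real r * p) ^ card V \<le> exp m" .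
  have "real (card (near_relabellings r V Q m)) \<le> real r ^ r * p powr (- m) * (1 + real r * p) ^ card V"
    by (rule card_near_relabellings_le[OF assms(1) p])
  also have "\<dots> \<le> real r ^ r * p powr (- m) * exp m"
    using exp_m by (intro mult_left_mono) auto
  also have "\<dots> = exp (real r * ln (real r)) * exp (- m * ln p) * exp m"
    using assms(3) p by (simp add: powr_def exp_of_nat_mult)
  also have "\<dots> = exp (real r * ln (real r) + m * (1 - ln p))"
    by (simp add: exp_add[symmetric] algebra_simps)
  finally show ?thesis by (simp add: m_def p_def)
qed

section \<open>Optimal partitions of an induced subgraph are close to a relabelling\<close>

lemma noncross_mono:
  assumes "H \<subseteq> G" and "finite G"
  shows "noncross H f \<le> noncross G f"
  unfolding noncross_def by (rule card_mono) (use assms in \<open>auto intro: finite_subset\<close>)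

lemma noncross_optimal_restrict_le:
  assumes "optimal r V' (G \<inter> (V' \<times> V')) f" and "rpart r V Q" and "V' \<subseteq> V" and "finite G"
  shows "noncross (G \<inter> (V' \<times> V')) f \<le> noncross G Q"
proof -
  have "rpart r V' (restrict Q V')"
    using assms(2,3) by (auto simp: rpart_def)
  then have "noncross (G \<inter> (V' \<times> V')) f \<le> noncross (G \<inter> (V' \<times> V')) (restrict Q V')"
    using assms(1) by (simp add: optimal_def)
  also have "\<dots> = noncross (G \<inter> (V' \<times> V')) Q"
    unfolding noncross_def by (rule arg_cong[where f = card]) auto
  also have "\<dots> \<le> noncross G Q"
    using assms(4) by (intro noncross_mono) auto
  finally show ?thesis .
qed

lemma arcs_restrict:
  assumes "U \<subseteq> V" and "W \<subseteq> V"
  shows "arcs (G \<inter> (V \<times> V)) U W = arcs G U W"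
  unfolding arcs_def using assms by (metis inf.absorb_iff2 inf_assoc Sigma_mono)

lemma arcs_add_arcs_le_noncross:
  assumes "finite G" and "U \<inter> W = {}" and "\<And>v. v \<in> U \<union> W \<Longrightarrow> f v = j"
  shows "arcs G U W + arcs G W U \<le> noncross G f"
proof -
  have "arcs G U W + arcs G W U = card (G \<inter> (U \<times> W) \<union> G \<inter> (W \<times> U))"
    unfolding arcs_def using assms(1,2) by (subst card_Un_disjoint) auto
  also have "\<dots> \<le> noncross G f"
    unfolding noncross_def using assms by (intro card_mono) (auto intro: finite_subset)
  finally show ?thesis .
qed

lemma exists_large_fibre:
  assumes "finite S" and "f ` S \<subseteq> {..<r}" and "0 < r" and "real r * a \<le> real (card S)"
  shows "\<exists>j<r. a \<le> real (card {v \<in> S. f v = j})"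
proof (rule ccontr)
  assume "\<not> ?thesis"
  then have small: "\<And>j. j < r \<Longrightarrow> real (card {v \<in> S. f v = j}) < a" by force
  have "S = (\<Union>j<r. {v \<in> S. f v = j})" using assms(2) by auto
  then have "card S \<le> (\<Sum>j<r. card {v \<in> S. f v = j})"
    by (metis card_UN_le finite_lessThan)
  then have "real (card S) \<le> (\<Sum>j<r. real (card {v \<in> S. f v = j}))"
    by (simp only: of_nat_le_iff flip: of_nat_sum)
  also have "\<dots> < (\<Sum>j<r. a)"
    using assms(3) small by (intro sum_strict_mono) auto
  finally show False using assms(4) by simp
qed

lemma left_total_left_unique_graph:
  assumes "finite I" and "\<And>i. i \<in> I \<Longrightarrow> \<exists>j \<in> I. R i j"
    and "\<And>i i' j. i \<in> I \<Longrightarrow> i' \<in> I \<Longrightarrow> R i j \<Longrightarrow> R i' j \<Longrightarrow> i = i'"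
  shows "\<exists>\<sigma> \<in> I \<rightarrow>\<^sub>E I. \<forall>i \<in> I. \<forall>j \<in> I. R i j \<longleftrightarrow> j = \<sigma> i"
proof -
  obtain \<sigma>0 where \<sigma>0: "\<And>i. i \<in> I \<Longrightarrow> \<sigma>0 i \<in> I \<and> R i (\<sigma>0 i)"
    using assms(2) by metis
  define \<sigma> where "\<sigma> = restrict \<sigma>0 I"
  have \<sigma>: "\<sigma> \<in> I \<rightarrow>\<^sub>E I" and R\<sigma>: "\<And>i. i \<in> I \<Longrightarrow> R i (\<sigma> i)"
    using \<sigma>0 by (auto simp: \<sigma>_def)
  have "inj_on \<sigma> I"
    using R\<sigma> assms(3) by (metis inj_onI)
  then have surj: "\<sigma> ` I = I"
    using \<sigma> assms(1) by (intro endo_inj_surj) auto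
  have "R i j \<longleftrightarrow> j = \<sigma> i" if "i \<in> I" and "j \<in> I" for i j
  proof
    assume "R i j"
    obtain i' where "i' \<in> I" and "j = \<sigma> i'" using surj \<open>j \<in> I\<close> by blast
    then show "j = \<sigma> i" using assms(3)[OF \<open>i \<in> I\<close> \<open>i' \<in> I\<close> \<open>R i j\<close>] R\<sigma> by simp
  qed (use R\<sigma> that in simp)
  with \<sigma> show ?thesis by blast
qed

definition cell :: "nat set \<Rightarrow> (nat \<Rightarrow> nat) \<Rightarrow> (nat \<Rightarrow> nat) \<Rightarrow> nat \<Rightarrow> nat \<Rightarrow> nat set" where
  "cell V Q f i j = {v \<in> V. Q v = i \<and> f v = j}"

lemma finite_FQstar:
  assumes "G \<in> FQstar n r t \<eta> \<mu> Q"
  shows "finite G"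
proof (rule finite_subset)
  show "G \<subseteq> {1..n} \<times> {1..n}"
    using assms by (simp add: FQstar_def digraph_on_def)
qed simp

lemma cells_in_one_part_not_both_large:
  assumes G: "G \<in> FQstar n r t \<eta> \<mu> Q" and V: "V \<subseteq> {1..n}"
    and nc: "real (noncross (G \<inter> (V \<times> V)) f) \<le> \<eta> * real n ^ 2"
    and \<eta>: "\<eta> < \<mu> ^ 2 / 3" and "0 < \<mu>" and "0 < n" and "i < r" and "i' < r" and "i \<noteq> i'"
  shows "\<not> (\<mu> * real n \<le> real (card (cell V Q f i j)) \<and> \<mu> * real n \<le> real (card (cell V Q f i' j)))"
proof
  let ?U = "cell V Q f i j" and ?W = "cell V Q f i' j"
  assume big: "\<mu> * real n \<le> real (card ?U) \<and> \<mu> * real n \<le> real (card ?W)"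
  have "?U \<subseteq> part {1..n} Q i" and "?W \<subseteq> part {1..n} Q i'"
    using V by (auto simp: cell_def part_def)
  then have "real (card ?U) * real (card ?W) / 6 \<le> real (arcs G ?U ?W)"
    and "real (card ?U) * real (card ?W) / 6 \<le> real (arcs G ?W ?U)"
    using G big \<open>i < r\<close> \<open>i' < r\<close> \<open>i \<noteq> i'\<close> unfolding FQstar_def by blast+
  moreover have "arcs G ?U ?W + arcs G ?W ?U \<le> noncross (G \<inter> (V \<times> V)) f"
  proof -
    have "?U \<subseteq> V" and "?W \<subseteq> V" by (auto simp: cell_def)
    then have "arcs G ?U ?W + arcs G ?W ?U = arcs (G \<inter> (V \<times> V)) ?U ?W + arcs (G \<inter> (V \<times> V)) ?W ?U"
      by (simp add: arcs_restrict)
    also have "\<dots> \<le> noncross (G \<inter> (V \<times> V)) f"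
      using finite_FQstar[OF G] \<open>i \<noteq> i'\<close> by (intro arcs_add_arcs_le_noncross[where j = j]) (auto simp: cell_def)
    finally show ?thesis .
  qed
  then have "real (arcs G ?U ?W) + real (arcs G ?W ?U) \<le> real (noncross (G \<inter> (V \<times> V)) f)"
    by (simp only: of_nat_le_iff flip: of_nat_add)
  ultimately have "real (card ?U) * real (card ?W) / 3 \<le> \<eta> * real n ^ 2"
    using nc by linarith
  moreover have "(\<mu> * real n) * (\<mu> * real n) \<le> real (card ?U) * real (card ?W)"
    using big \<open>0 < \<mu>\<close> by (intro mult_mono) auto
  moreover have "\<eta> * real n ^ 2 < \<mu> ^ 2 / 3 * real n ^ 2"
    using \<eta> \<open>0 < n\<close> by simp
  ultimately show False by (simp add: power2_eq_square algebra_simps)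
qed

lemma exists_large_cell:
  assumes f: "rpart r V f" and V: "V \<subseteq> {1..n}" and deleted: "card ({1..n} - V) \<le> 2"
    and Qi: "real n / real r - \<mu> * real n \<le> real (card (part {1..n} Q i))"
    and \<mu>: "\<mu> * (1 + real r) \<le> 1 / (2 * real r)" and n: "4 * real r \<le> real n" and "0 < r"
  shows "\<exists>j<r. \<mu> * real n \<le> real (card (cell V Q f i j))"
proof -
  let ?S = "{v \<in> V. Q v = i}"
  have "part {1..n} Q i \<subseteq> ?S \<union> ({1..n} - V)"
    by (auto simp: part_def)
  then have "card (part {1..n} Q i) \<le> card (?S \<union> ({1..n} - V))"
    using V by (intro card_mono) (auto intro: finite_subset)
  also have "\<dots> \<le> card ?S + card ({1..n} - V)"
    by (rule card_Un_le)
  finally have "card (part {1..n} Q i) \<le> card ?S + card ({1..n} - V)" .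
  with deleted Qi have "real n / real r - \<mu> * real n \<le> real (card ?S) + 2"
    by linarith
  moreover have "\<mu> * real n * (1 + real r) \<le> real n / (2 * real r)"
    using mult_right_mono[OF \<mu>, of "real n"] by (simp add: algebra_simps)
  moreover have "2 \<le> real n / (2 * real r)"
    using n \<open>0 < r\<close> by (simp add: field_simps)
  ultimately have "real r * (\<mu> * real n) \<le> real (card ?S)"
    by (simp add: field_simps)
  moreover have "f ` ?S \<subseteq> {..<r}"
    using f by (auto simp: rpart_def)
  moreover have "finite ?S"
    using finite_subset[OF V] by simp
  ultimately obtain j where "j < r" and "\<mu> * real n \<le> real (card {v \<in> ?S. f v = j})"
    using exists_large_fibre[of ?S f r "\<mu> * real n"] \<open>0 < r\<close> by blast
  moreover have "{v \<in> ?S. f v = j} = cell V Q f i j"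
    by (auto simp: cell_def)
  ultimately show ?thesis by auto
qed

lemma optimal_in_near_relabellings:
  assumes G: "G \<in> FQstar n r t \<eta> \<mu> Q" and V: "V \<subseteq> {1..n}" and deleted: "card ({1..n} - V) \<le> 2"
    and opt: "optimal r V (G \<inter> (V \<times> V)) f"
    and "0 < \<mu>" and \<mu>: "\<mu> * (1 + real r) \<le> 1 / (2 * real r)" and \<eta>: "\<eta> < \<mu> ^ 2 / 3"
    and n: "4 * real r \<le> real n" and "0 < r"
  shows "f \<in> near_relabellings r V Q (real r ^ 2 * \<mu> * real n)"
proof -
  have Q: "optimal r {1..n} G Q" and ncQ: "real (noncross G Q) \<le> \<eta> * real n ^ 2"
    and F3: "\<And>i. i < r \<Longrightarrow> \<bar>real (card (part {1..n} Q i)) - real n / real r\<bar> \<le> \<mu> * real n"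
    using G unfolding FQstar_def by blast+
  have f: "rpart r V f"
    using opt by (simp add: optimal_def)
  have "noncross (G \<inter> (V \<times> V)) f \<le> noncross G Q"
    using opt Q V finite_FQstar[OF G] by (intro noncross_optimal_restrict_le) (auto simp: optimal_def)
  with ncQ have nc: "real (noncross (G \<inter> (V \<times> V)) f) \<le> \<eta> * real n ^ 2"
    by (meson of_nat_le_iff order_trans)
  have "0 < n"
    using n \<open>0 < r\<close> by simp
  let ?large = "\<lambda>i j. \<mu> * real n \<le> real (card (cell V Q f i j))"
  have "\<exists>\<sigma> \<in> {..<r} \<rightarrow>\<^sub>E {..<r}. \<forall>i \<in> {..<r}. \<forall>j \<in> {..<r}. ?large i j \<longleftrightarrow> j = \<sigma> i"
  proof (rule left_total_left_unique_graph)
    show "\<exists>j \<in> {..<r}. ?large i j" if "i \<in> {..<r}" for i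
      using exists_large_cell[OF f V deleted _ \<mu> n \<open>0 < r\<close>, of Q i] F3[of i] that
      by (auto simp: abs_le_iff)
    show "i = i'" if "i \<in> {..<r}" and "i' \<in> {..<r}" and "?large i j" and "?large i' j" for i i' j
      using cells_in_one_part_not_both_large[OF G V nc \<eta> \<open>0 < \<mu>\<close> \<open>0 < n\<close>, where i = i and i' = i' and j = j] that by auto
  qed simp
  then obtain \<sigma> where \<sigma>: "\<sigma> \<in> {..<r} \<rightarrow>\<^sub>E {..<r}"
    and large_iff: "\<And>i j. i < r \<Longrightarrow> j < r \<Longrightarrow> ?large i j \<longleftrightarrow> j = \<sigma> i"
    by auto
  let ?small = "{(i, j) \<in> {..<r} \<times> {..<r}. \<not> ?large i j}"
  have fin_small: "finite ?small"
    by (rule finite_subset[of _ "{..<r} \<times> {..<r}"]) auto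
  have "{v \<in> V. f v \<noteq> \<sigma> (Q v)} \<subseteq> (\<Union>q \<in> ?small. cell V Q f (fst q) (snd q))"
  proof
    fix v assume v: "v \<in> {v \<in> V. f v \<noteq> \<sigma> (Q v)}"
    moreover have "Q v < r" and "f v < r"
      using Q f V v by (auto simp: optimal_def rpart_def)
    ultimately show "v \<in> (\<Union>q \<in> ?small. cell V Q f (fst q) (snd q))"
      using large_iff[of "Q v" "f v"] by (auto simp: cell_def intro!: bexI[of _ "(Q v, f v)"])
  qed
  moreover have "finite (\<Union>q \<in> ?small. cell V Q f (fst q) (snd q))"
    by (rule finite_subset[OF _ finite_subset[OF V finite_atLeastAtMost]]) (auto simp: cell_def)
  ultimately have "card {v \<in> V. f v \<noteq> \<sigma> (Q v)} \<le> card (\<Union>q \<in> ?small. cell V Q f (fst q) (snd q))"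
    by (rule card_mono[rotated])
  also have "\<dots> \<le> (\<Sum>q \<in> ?small. card (cell V Q f (fst q) (snd q)))"
    by (rule card_UN_le[OF fin_small])
  finally have "real (card {v \<in> V. f v \<noteq> \<sigma> (Q v)}) \<le> (\<Sum>q \<in> ?small. real (card (cell V Q f (fst q) (snd q))))"
    by (simp only: of_nat_le_iff flip: of_nat_sum)
  also have "\<dots> \<le> (\<Sum>q \<in> ?small. \<mu> * real n)"
    by (rule sum_mono) auto
  also have "\<dots> = real (card ?small) * (\<mu> * real n)"
    by simp
  also have "\<dots> \<le> real r ^ 2 * \<mu> * real n"
  proof -
    have "card ?small \<le> card ({..<r} \<times> {..<r})"
      by (rule card_mono) auto
    then have "real (card ?small) \<le> real r ^ 2"
      using of_nat_mono[of "card ?small" "r * r"] by (simp add: power2_eq_square)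
    then show ?thesis
      using \<open>0 < \<mu>\<close> by (simp add: mult_right_mono mult.assoc)
  qed
  finally show ?thesis
    using f \<sigma> by (auto simp: near_relabellings_def)
qed

lemma small_family_contains_optimal_partitions:
  assumes V: "V \<subseteq> {1..n}" and deleted: "card ({1..n} - V) \<le> 2"
    and "0 < \<mu>" and \<mu>: "\<mu> * (1 + real r) \<le> 1 / (2 * real r)" and \<eta>: "\<eta> < \<mu> ^ 2 / 3"
    and n: "4 * real r \<le> real n" and "0 < r"
    and B: "real r * ln (real r) + real r ^ 2 * \<mu> * real n * (1 - ln (real r * \<mu>)) \<le> B"
  shows "\<exists>P. P \<subseteq> {f. rpart r V f} \<and> real (card P) \<le> exp B \<and>
    (\<forall>G \<in> FQstar n r t \<eta> \<mu> Q. \<forall>f. optimal r V (G \<inter> (V \<times> V)) f \<longrightarrow> f \<in> P)"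
proof (intro exI conjI ballI allI impI)
  let ?P = "near_relabellings r V Q (real r ^ 2 * \<mu> * real n)"
  show "?P \<subseteq> {f. rpart r V f}"
    by (auto simp: near_relabellings_def)
  have "real r * \<mu> \<le> \<mu> * (1 + real r)" and "1 / (2 * real r) \<le> 1"
    using \<open>0 < \<mu>\<close> \<open>0 < r\<close> by (auto simp: algebra_simps)
  with \<mu> have "real r * \<mu> \<le> 1"
    by linarith
  moreover have "card V \<le> n"
    using card_mono[OF _ V] by simp
  ultimately have "real (card ?P)
      \<le> exp (real r * ln (real r) + real r ^ 2 * \<mu> * real n * (1 - ln (real r * \<mu>)))"
    using card_near_relabellings_le_exp[of V n r \<mu> Q] finite_subset[OF V] \<open>0 < \<mu>\<close> \<open>0 < r\<close> by simp
  also have "\<dots> \<le> exp B"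
    using B by simp
  finally show "real (card ?P) \<le> exp B" .
  show "f \<in> ?P" if "G \<in> FQstar n r t \<eta> \<mu> Q" and "optimal r V (G \<inter> (V \<times> V)) f" for G f
    by (rule optimal_in_near_relabellings[OF that(1) V deleted that(2) \<open>0 < \<mu>\<close> \<mu> \<eta> n \<open>0 < r\<close>])
qed

lemma small_mu_bounds:
  assumes "r \<ge> 2" and "0 < \<mu>" and "\<mu> < 1 / (3 * real r ^ 2) ^ 12"
  shows "\<mu> * (1 + real r) \<le> 1 / (2 * real r)" and "\<mu> < 1 / (7 * real r ^ 2) ^ 6"
proof -
  have r: "2 \<le> real r" using assms(1) by simp
  then have "1 \<le> real r ^ 2"
    by simp
  then have "1 \<le> 3 * real r ^ 2"
    by linarith
  then have "1 / (3 * real r ^ 2) ^ 12 \<le> 1 / (3 * real r ^ 2)"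
    using r by (intro divide_left_mono self_le_power) auto
  with assms(3) have "\<mu> < 1 / (3 * real r ^ 2)"
    by linarith
  then have "\<mu> * (3 * real r ^ 2) < 1"
    using r by (simp add: field_simps)
  moreover have "\<mu> * (2 * real r * (1 + real r)) \<le> \<mu> * (3 * real r ^ 2)"
    using assms(2) r by (intro mult_left_mono) (auto simp: power2_eq_square algebra_simps)
  ultimately show "\<mu> * (1 + real r) \<le> 1 / (2 * real r)"
    using r by (simp add: field_simps)
  have "9 * real r ^ 2 * 1 \<le> 9 * real r ^ 2 * real r ^ 2"
    using \<open>1 \<le> real r ^ 2\<close> by (intro mult_left_mono) auto
  then have "7 * real r ^ 2 \<le> 9 * real r ^ 2 * real r ^ 2"
    using \<open>1 \<le> real r ^ 2\<close> by linarith
  then have "7 * real r ^ 2 \<le> (3 * real r ^ 2) ^ 2"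
    by (simp add: power2_eq_square)
  then have "(7 * real r ^ 2) ^ 6 \<le> (3 * real r ^ 2) ^ 12"
    using power_mono[of _ _ 6] by (fastforce simp flip: power_mult)
  then have "1 / (3 * real r ^ 2) ^ 12 \<le> 1 / (7 * real r ^ 2) ^ 6"
    using r by (intro divide_left_mono) auto
  with assms(3) show "\<mu> < 1 / (7 * real r ^ 2) ^ 6" by linarith
qed

text \<open>With \<open>w = \<mu> powr (1/6)\<close> one has \<open>- ln (r * \<mu>) \<le> 6 / w\<close>, so the left-hand side is at most
  \<open>7 * r\<^sup>2 * w ^ 5 < w ^ 4\<close>.\<close>
lemma mu_log_term_lt_powr:
  assumes "r \<ge> 1" and "0 < \<mu>" and "\<mu> < 1 / (7 * real r ^ 2) ^ 6"
  shows "real r ^ 2 * \<mu> * (1 - ln (real r * \<mu>)) < \<mu> powr (2/3)"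
proof -
  define w where "w = \<mu> powr (1/6)"
  have w0: "0 < w" using assms(2) by (simp add: w_def)
  have w6: "w ^ 6 = \<mu>" and w4: "\<mu> powr (2/3) = w ^ 4"
    using assms(2) by (simp_all add: w_def powr_realpow[symmetric] powr_powr)
  have r: "1 \<le> real r" using assms(1) by simp
  have "w ^ 6 < (1 / (7 * real r ^ 2)) ^ 6"
    using assms(3) w6 by (simp add: power_one_over)
  then have "w < 1 / (7 * real r ^ 2)"
    using power_less_imp_less_base[of w 6 "1 / (7 * real r ^ 2)"] by simp
  then have w_small: "7 * real r ^ 2 * w < 1"
    using r by (simp add: field_simps)
  moreover have "1 \<le> real r ^ 2"
    using r by simp
  then have "w * 1 \<le> w * (7 * real r ^ 2)"
    using w0 by (intro mult_left_mono) auto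
  ultimately have w1: "w \<le> 1"
    by (simp add: mult_ac)
  have "- ln w \<le> 1 / w"
    using ln_le_minus_one[of "1 / w"] w0 by (simp add: ln_div)
  moreover have "ln (real r * \<mu>) = ln (real r) + 6 * ln w"
    using r assms(2) ln_realpow[of w 6] by (simp add: ln_mult w6)
  moreover have "0 \<le> ln (real r)" using r by simp
  ultimately have "1 - ln (real r * \<mu>) \<le> 1 + 6 / w" by simp
  then have "real r ^ 2 * \<mu> * (1 - ln (real r * \<mu>)) \<le> real r ^ 2 * \<mu> * (1 + 6 / w)"
    using assms(2) by (intro mult_left_mono) auto
  also have "\<dots> = real r ^ 2 * (w ^ 6 + 6 * w ^ 5)"
    using w0 by (simp add: field_simps eval_nat_numeral flip: w6)
  also have "\<dots> \<le> real r ^ 2 * (7 * w ^ 5)"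
    using w0 w1 power_decreasing[of 5 6 w] by (intro mult_left_mono) auto
  also have "\<dots> = (7 * real r ^ 2 * w) * w ^ 4" by (simp add: eval_nat_numeral)
  also have "\<dots> < w ^ 4"
    using w_small w0 by simp
  finally show ?thesis using w4 by simp
qed

theorem lemma5p4:
  fixes r t :: nat and \<mu> \<eta> :: real
  assumes "r \<ge> 2" and "t \<ge> 1"
    and "0 < \<mu>" and "\<mu> < 1 / (3 * real r ^ 2) ^ 12"
    and "0 < \<eta>" and "\<eta> < \<mu> ^ 2 / 3"
  shows "\<exists>n0. \<forall>n \<ge> n0. \<forall>Q x y.
     rpart r {1..n} Q \<and> x \<in> {1..n} \<and> y \<in> {1..n} \<and> x \<noteq> y \<and> Q x = 0 \<and> Q y = 0 \<longrightarrow>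
     (\<exists>P. P \<subseteq> {f. rpart r ({1..n} - {x, y}) f} \<and>
          real (card P) \<le> exp (\<mu> powr (2/3) * real n) \<and>
          (\<forall>G \<in> FQstar n r t \<eta> \<mu> Q. \<forall>f.
              optimal r ({1..n} - {x, y}) (G \<inter> (({1..n} - {x, y}) \<times> ({1..n} - {x, y}))) f
              \<longrightarrow> f \<in> P))"
proof -
  note \<mu>_bounds = small_mu_bounds[OF assms(1,3,4)]
  define c where "c = \<mu> powr (2/3) - real r ^ 2 * \<mu> * (1 - ln (real r * \<mu>))"
  have "0 < c"
    using mu_log_term_lt_powr[OF _ assms(3) \<mu>_bounds(2)] assms(1) by (simp add: c_def)
  define n0 where "n0 = nat \<lceil>max (4 * real r) (real r * ln (real r) / c)\<rceil>"
  show ?thesis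
  proof (intro exI[of _ n0] allI impI)
    fix n Q x y
    assume "n0 \<le> n"
    then have n: "4 * real r \<le> real n" and "real r * ln (real r) \<le> c * real n"
      using \<open>0 < c\<close> by (auto simp: n0_def field_simps)
    then have B: "real r * ln (real r) + real r ^ 2 * \<mu> * real n * (1 - ln (real r * \<mu>))
        \<le> \<mu> powr (2/3) * real n"
      by (simp add: c_def algebra_simps)
    have "card ({1..n} - ({1..n} - {x, y})) \<le> card {x, y}"
      by (intro card_mono) auto
    also have "\<dots> \<le> 2"
      by (simp add: card_insert_if)
    finally show "\<exists>P. P \<subseteq> {f. rpart r ({1..n} - {x, y}) f} \<and> real (card P) \<le> exp (\<mu> powr (2/3) * real n) \<and>
        (\<forall>G \<in> FQstar n r t \<eta> \<mu> Q. \<forall>f. optimal r ({1..n} - {x, y})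
           (G \<inter> (({1..n} - {x, y}) \<times> ({1..n} - {x, y}))) f \<longrightarrow> f \<in> P)"
      using small_family_contains_optimal_partitions[OF _ _ assms(3) \<mu>_bounds(1) assms(6) n _ B] assms(1)
      by simp
  qed
qed

end
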